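(* Let $G$ be a group, let $\mathcal{R}=\mathbb{C}^N$ with standard basis $e_0,\dots,e_{N-1}$ and $\mathcal{H}=\mathbb{C}^N$ with computational basis $|0\rangle,\dots,|N-1\rangle$. Let $V:G\to\mathcal{U}(\mathcal{R})$ and $W:G\to\mathcal{U}(\mathcal{H})$ be unitary representations. Define, for nonzero $x=\sum_i x_ie_i$, $T(x)=\frac{1}{\|x\|}\sum_i x_i|i\rangle$ and $\hat{T}(x)=\sum_i x_i|i\rangle$, and let $A:G\to\mathcal{U}(\mathcal{H})$ be a representation induced by $\hat{T}$, i.e. $\hat{T}\circ V(g)=A(g)\circ\hat{T}$ for all $g\in G$. Let $U_{inv}$ and $U_\theta$ be unitaries on $\mathcal{H}$, let $\mathcal{O}$ be an observable on $\mathcal{H}$, and set $$h_\theta(x)=\operatorname{tr}\!\left[U_{inv}U_\theta T(x)\,(U_{inv}U_\theta T(x))^\dagger\,\mathcal{O}\right].$$ If $U_{inv}$ and $\mathcal{O}$ commute with $W(g)$ for all $g\in G$, and $U_\theta$ is an intertwining map from $A$ to $W$, i.e. $U_\theta A(g)=W(g)U_\theta$ for all $g\in G$, then $h_\theta(V(g)x)=h_\theta(x)$ for all $g\in G$ and all nonzero $x\in\mathcal{R}$.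
   Context: $\mathcal{U}(\cdot)$ denotes the group of unitary operators; a unitary representation is a homomorphism into it. $T(x)$ is viewed as a column vector so $T(x)T(x)^\dagger$ is the corresponding density matrix. *)

theory Defs
  imports "Jordan_Normal_Form.Matrix" "HOL-Algebra.Group"
begin

definition cadj :: "complex mat \<Rightarrow> complex mat" where
  "cadj A = mat (dim_col A) (dim_row A) (\<lambda>(i,j). cnj (A $$ (j,i)))"

definition unitary_mat :: "nat \<Rightarrow> complex mat \<Rightarrow> bool" where
  "unitary_mat N U \<longleftrightarrow> U \<in> carrier_mat N N \<and> cadj U * U = 1\<^sub>m N \<and> U * cadj U = 1\<^sub>m N"

text \<open>An observable is a Hermitian (self-adjoint) operator.\<close>
definition hermitian_mat :: "nat \<Rightarrow> complex mat \<Rightarrow> bool" where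
  "hermitian_mat N H \<longleftrightarrow> H \<in> carrier_mat N N \<and> cadj H = H"

definition unitary_rep :: "('g, 'b) monoid_scheme \<Rightarrow> nat \<Rightarrow> ('g \<Rightarrow> complex mat) \<Rightarrow> bool" where
  "unitary_rep G N V \<longleftrightarrow>
     (\<forall>g\<in>carrier G. unitary_mat N (V g)) \<and>
     (\<forall>g\<in>carrier G. \<forall>h\<in>carrier G. V (g \<otimes>\<^bsub>G\<^esub> h) = V g * V h)"

definition vnorm :: "complex vec \<Rightarrow> real" where
  "vnorm x = sqrt (\<Sum>i<dim_vec x. (cmod (x $ i))\<^sup>2)"

definition T_enc :: "complex vec \<Rightarrow> complex mat" where
  "T_enc x = mat (dim_vec x) 1 (\<lambda>(i,j). x $ i / complex_of_real (vnorm x))"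

definition That_enc :: "complex vec \<Rightarrow> complex mat" where
  "That_enc x = mat (dim_vec x) 1 (\<lambda>(i,j). x $ i)"

definition mtrace :: "complex mat \<Rightarrow> complex" where
  "mtrace M = (\<Sum>i<dim_row M. M $$ (i,i))"

definition h_theta :: "complex mat \<Rightarrow> complex mat \<Rightarrow> complex mat \<Rightarrow> complex vec \<Rightarrow> complex" where
  "h_theta Uinv Utheta Obs x =
     mtrace (Uinv * Utheta * T_enc x * cadj (Uinv * Utheta * T_enc x) * Obs)"

end

theory Submission imports Defs begin

text \<open>Since \<open>A g\<close> is unitary and \<open>That_enc (V g x) = A g That_enc x\<close>, the vector \<open>V g x\<close> has
  the same norm as \<open>x\<close>, so also \<open>T_enc (V g x) = A g T_enc x\<close>. The intertwining relations then
  turn the state \<open>Uinv Utheta T_enc x\<close> into \<open>W g Uinv Utheta T_enc x\<close>, i.e. conjugate its density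
  matrix by \<open>W g\<close>; by cyclicity of the trace and since \<open>Obs\<close> commutes with \<open>W g\<close>, the
  expectation value of \<open>Obs\<close> is unchanged.\<close>

lemma cadj_carrier_mat [simp]: "A \<in> carrier_mat n m \<Longrightarrow> cadj A \<in> carrier_mat m n"
  by (auto simp: cadj_def)

lemma cadj_mult:
  assumes "A \<in> carrier_mat nr n" "B \<in> carrier_mat n nc"
  shows "cadj (A * B) = cadj B * cadj A"
  using assms by (intro eq_matI) (auto simp: cadj_def scalar_prod_def ac_simps)

lemma mtrace_mult_comm:
  assumes "A \<in> carrier_mat n m" "B \<in> carrier_mat m n"
  shows "mtrace (A * B) = mtrace (B * A)"
proof -
  have "mtrace (A * B) = (\<Sum>i<n. \<Sum>j<m. A $$ (i,j) * B $$ (j,i))"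
    using assms unfolding mtrace_def
    by (auto simp: lessThan_atLeast0 scalar_prod_def intro!: sum.cong)
  also have "\<dots> = (\<Sum>j<m. \<Sum>i<n. B $$ (j,i) * A $$ (i,j))"
    by (subst sum.swap) (simp add: ac_simps)
  also have "\<dots> = mtrace (B * A)"
    using assms unfolding mtrace_def
    by (auto simp: lessThan_atLeast0 scalar_prod_def intro!: sum.cong)
  finally show ?thesis .
qed

lemma unitary_mat_carrier_mat: "unitary_mat N U \<Longrightarrow> U \<in> carrier_mat N N"
  by (simp add: unitary_mat_def)

lemma cadj_commute_if_unitary_commute:
  assumes U: "unitary_mat N U" and H: "H \<in> carrier_mat N N" and comm: "H * U = U * H"
  shows "cadj U * H = H * cadj U"
proof -
  have UC: "U \<in> carrier_mat N N" "cadj U \<in> carrier_mat N N"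
    using U by (simp_all add: unitary_mat_def)
  have "cadj U * H = cadj U * H * (U * cadj U)"
    using U H by (simp add: unitary_mat_def)
  also have "\<dots> = cadj U * (H * U) * cadj U"
    using UC H by (simp add: assoc_mult_mat[of _ N N _ N _ N])
  also have "\<dots> = (cadj U * U) * H * cadj U"
    using UC H by (simp add: comm assoc_mult_mat[of _ N N _ N _ N])
  finally show ?thesis
    using U H by (simp add: unitary_mat_def)
qed

lemma mult_cadj_mult:
  assumes U: "U \<in> carrier_mat N N" and M: "M \<in> carrier_mat N k"
  shows "(U * M) * cadj (U * M) = U * (M * cadj M) * cadj U"
proof -
  have UC: "cadj U \<in> carrier_mat N N" and MC: "cadj M \<in> carrier_mat k N"
    using U M by simp_all
  have "(U * M) * cadj (U * M) = U * (M * (cadj M * cadj U))"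
    using assoc_mult_mat[OF U M mult_carrier_mat[OF MC UC]] by (simp add: cadj_mult[OF U M])
  also have "\<dots> = U * (M * cadj M) * cadj U"
    using assoc_mult_mat[OF M MC UC] assoc_mult_mat[OF U mult_carrier_mat[OF M MC] UC] by simp
  finally show ?thesis .
qed

lemma mtrace_density_mult_unitary:
  assumes U: "unitary_mat N U" and H: "H \<in> carrier_mat N N" and comm: "H * U = U * H"
    and M: "M \<in> carrier_mat N k"
  shows "mtrace ((U * M) * cadj (U * M) * H) = mtrace (M * cadj M * H)"
proof -
  have UC: "U \<in> carrier_mat N N" "cadj U \<in> carrier_mat N N"
    using U by (simp_all add: unitary_mat_def)
  define R where "R = M * cadj M"
  have R: "R \<in> carrier_mat N N"
    using M by (simp add: R_def)
  have UR: "U * R \<in> carrier_mat N N"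
    using UC R by simp
  have "(U * M) * cadj (U * M) * H = U * R * (cadj U * H)"
    using mult_cadj_mult[OF UC(1) M] assoc_mult_mat[OF UR UC(2) H] by (simp add: R_def)
  also have "\<dots> = U * (R * H) * cadj U"
    using cadj_commute_if_unitary_commute[OF U H comm] assoc_mult_mat[OF UR H UC(2)]
      assoc_mult_mat[OF UC(1) R H] by simp
  also have "mtrace \<dots> = mtrace ((cadj U * U) * (R * H))"
    using mtrace_mult_comm[OF mult_carrier_mat[OF UC(1) mult_carrier_mat[OF R H]] UC(2)]
      assoc_mult_mat[OF UC(2,1) mult_carrier_mat[OF R H]] by simp
  also have "\<dots> = mtrace (R * H)"
    using U R H by (simp add: unitary_mat_def)
  finally show ?thesis
    by (simp add: R_def)
qed

lemma mult_intertwining: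
  assumes "S \<in> carrier_mat N N" "A \<in> carrier_mat N N" "B \<in> carrier_mat N N"
    and "X \<in> carrier_mat N k" and "S * A = B * S"
  shows "S * (A * X) = B * (S * X)"
  using assoc_mult_mat[OF assms(1,2,4)] assoc_mult_mat[OF assms(3,1,4)] assms(5) by simp

lemma That_enc_carrier_mat: "x \<in> carrier_vec N \<Longrightarrow> That_enc x \<in> carrier_mat N 1"
  by (auto simp: That_enc_def)

lemma T_enc_carrier_mat: "x \<in> carrier_vec N \<Longrightarrow> T_enc x \<in> carrier_mat N 1"
  by (auto simp: T_enc_def)

lemma T_enc_eq_smult_That_enc: "T_enc x = (1 / complex_of_real (vnorm x)) \<cdot>\<^sub>m That_enc x"
  by (auto simp: T_enc_def That_enc_def)

lemma vnorm_nonneg: "vnorm x \<ge> 0"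
  by (simp add: vnorm_def sum_nonneg)

lemma cadj_That_enc_mult_That_enc:
  "(cadj (That_enc x) * That_enc x) $$ (0,0) = complex_of_real ((vnorm x)\<^sup>2)"
  unfolding vnorm_def That_enc_def cadj_def
  by (auto simp: scalar_prod_def lessThan_atLeast0 sum_nonneg mult.commute intro!: sum.cong)
    (metis complex_norm_square of_real_power)

lemma cadj_mult_unitary_self:
  assumes U: "unitary_mat N U" and X: "X \<in> carrier_mat N k"
  shows "cadj (U * X) * (U * X) = cadj X * X"
proof -
  have UC: "U \<in> carrier_mat N N" "cadj U \<in> carrier_mat N N" and XC: "cadj X \<in> carrier_mat k N"
    using U X by (simp_all add: unitary_mat_def)
  have "cadj (U * X) * (U * X) = cadj X * (cadj U * (U * X))"
    using assoc_mult_mat[OF XC UC(2) mult_carrier_mat[OF UC(1) X]] by (simp add: cadj_mult[OF UC(1) X])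
  also have "\<dots> = cadj X * X"
    using U X by (simp add: assoc_mult_mat[OF UC(2,1) X, symmetric] unitary_mat_def)
  finally show ?thesis .
qed

lemma vnorm_eq_if_That_enc_unitary:
  assumes "unitary_mat N U" "x \<in> carrier_vec N" "That_enc y = U * That_enc x"
  shows "vnorm y = vnorm x"
proof -
  have "complex_of_real ((vnorm y)\<^sup>2) = complex_of_real ((vnorm x)\<^sup>2)"
    using assms cadj_mult_unitary_self[of N U "That_enc x" 1]
    by (metis That_enc_carrier_mat cadj_That_enc_mult_That_enc)
  then have "(vnorm y)\<^sup>2 = (vnorm x)\<^sup>2"
    using of_real_eq_iff by blast
  then show ?thesis
    using vnorm_nonneg power2_eq_iff_nonneg by blast
qed

text \<open>No hypothesis \<open>x \<noteq> 0\<close> is needed: the normalising factors agree, even when both are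
  \<open>1 / 0 = 0\<close>.\<close>
lemma T_enc_eq_if_That_enc_unitary:
  assumes U: "unitary_mat N U" and x: "x \<in> carrier_vec N" and Ty: "That_enc y = U * That_enc x"
  shows "T_enc y = U * T_enc x"
  using mult_smult_distrib[OF unitary_mat_carrier_mat[OF U] That_enc_carrier_mat[OF x]]
  by (simp add: T_enc_eq_smult_That_enc Ty vnorm_eq_if_That_enc_unitary[OF assms])

theorem proposition2:
  fixes G :: "('g, 'b) monoid_scheme"
    and N :: nat
    and V W A :: "'g \<Rightarrow> complex mat"
    and Uinv Utheta Obs :: "complex mat"
  assumes "group G"
    and "unitary_rep G N V"
    and "unitary_rep G N W"
    and "unitary_rep G N A"
    and "\<forall>g\<in>carrier G. \<forall>x\<in>carrier_vec N. That_enc (V g *\<^sub>v x) = A g * That_enc x"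
    and "unitary_mat N Uinv"
    and "unitary_mat N Utheta"
    and "hermitian_mat N Obs"
    and "\<forall>g\<in>carrier G. Uinv * W g = W g * Uinv"
    and "\<forall>g\<in>carrier G. Obs * W g = W g * Obs"
    and "\<forall>g\<in>carrier G. Utheta * A g = W g * Utheta"
  shows "\<forall>g\<in>carrier G. \<forall>x\<in>carrier_vec N. x \<noteq> 0\<^sub>v N \<longrightarrow>
           h_theta Uinv Utheta Obs (V g *\<^sub>v x) = h_theta Uinv Utheta Obs x"
proof (intro ballI impI)
  fix g and x :: "complex vec"
  assume g: "g \<in> carrier G" and x: "x \<in> carrier_vec N"
  have W: "unitary_mat N (W g)" and A: "unitary_mat N (A g)"
    using assms(3,4) g by (simp_all add: unitary_rep_def)
  have C: "Uinv \<in> carrier_mat N N" "Utheta \<in> carrier_mat N N" "Obs \<in> carrier_mat N N"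
    "W g \<in> carrier_mat N N" "A g \<in> carrier_mat N N"
    using assms(6-8) W A by (simp_all add: unitary_mat_def hermitian_mat_def)
  have T: "T_enc x \<in> carrier_mat N 1"
    using x by (rule T_enc_carrier_mat)
  have "Uinv * Utheta * T_enc (V g *\<^sub>v x) = Uinv * (Utheta * (A g * T_enc x))"
    using T_enc_eq_if_That_enc_unitary[OF A x] assms(5) g x
      assoc_mult_mat[OF C(1,2) mult_carrier_mat[OF C(5) T]] by simp
  also have "\<dots> = Uinv * (W g * (Utheta * T_enc x))"
    using mult_intertwining[OF C(2,5,4) T] assms(11) g by simp
  also have "\<dots> = W g * (Uinv * Utheta * T_enc x)"
    using mult_intertwining[OF C(1,4,4) mult_carrier_mat[OF C(2) T]] assms(9) g
      assoc_mult_mat[OF C(1,2) T] by simp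
  finally show "h_theta Uinv Utheta Obs (V g *\<^sub>v x) = h_theta Uinv Utheta Obs x"
    using mtrace_density_mult_unitary[OF W C(3) _ mult_carrier_mat[OF mult_carrier_mat[OF C(1,2)] T]]
      assms(10) g
    by (simp add: h_theta_def)
qed

end
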